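(* (a) There are $2^{\mathfrak c}$ ultrafilters $x\in\beta\mathbb{N}$ that are not on finite levels, i.e. $x\notin\bigcup_{i=0}^\infty\overline{L_i}$. (b) There are $2^{\mathfrak c}$ ultrafilters that are irreducible in $\beta\mathbb{N}$ and not on finite levels. (c) $\bigcup_{i=0}^\infty\overline{L_i}\neq\overline{\bigcup_{i=0}^\infty L_i}$.
   Context: $\mathbb{N}=\{1,2,3,\dots\}$; $\beta\mathbb{N}$ is the set of ultrafilters on $\mathbb{N}$ (Stone–Čech compactification, naturals identified with principal ultrafilters), with multiplication: $A\in xy$ iff $\{n:A/n\in y\}\in x$, $A/n=\{m:mn\in A\}$. For $A\subseteq\mathbb{N}$, $\overline{A}=\{x\in\beta\mathbb{N}:A\in x\}$. $P$ is the set of primes, $L_0=\{1\}$, $L_n=\{a_1\cdots a_n:a_i\in P\}$. An ultrafilter is on a finite level if it lies in $\overline{L_i}$ for some $i\ge0$. $\mathfrak c=|\mathbb{R}|$. Irreducible: not of the form $yz$ with $y,z\in\beta\mathbb{N}\setminus\{1\}$. *)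

theory Defs
  imports Complex_Main "HOL-Library.Equipollence" "HOL-Computational_Algebra.Primes"
begin

definition Npos :: "nat set" where "Npos = {1..}"

definition is_uf :: "nat set set \<Rightarrow> bool" where
  "is_uf U \<longleftrightarrow> (\<forall>A\<in>U. A \<subseteq> Npos) \<and> Npos \<in> U \<and> {} \<notin> U
     \<and> (\<forall>A B. A \<in> U \<longrightarrow> B \<in> U \<longrightarrow> A \<inter> B \<in> U)
     \<and> (\<forall>A B. A \<in> U \<longrightarrow> A \<subseteq> B \<longrightarrow> B \<subseteq> Npos \<longrightarrow> B \<in> U)
     \<and> (\<forall>A. A \<subseteq> Npos \<longrightarrow> A \<in> U \<or> Npos - A \<in> U)"

definition betaN :: "nat set set set" where "betaN = {U. is_uf U}"

text \<open>Principal ultrafilter at n (naturals identified with principal ultrafilters).\<close>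
definition principal :: "nat \<Rightarrow> nat set set" where
  "principal n = {A. A \<subseteq> Npos \<and> n \<in> A}"

definition divset :: "nat set \<Rightarrow> nat \<Rightarrow> nat set" where
  "divset A n = {m \<in> Npos. m * n \<in> A}"

definition bmult :: "nat set set \<Rightarrow> nat set set \<Rightarrow> nat set set" where
  "bmult x y = {A. A \<subseteq> Npos \<and> {n \<in> Npos. divset A n \<in> y} \<in> x}"

definition clos :: "nat set \<Rightarrow> nat set set set" where
  "clos A = {x \<in> betaN. A \<in> x}"

definition L :: "nat \<Rightarrow> nat set" where
  "L n = {prod_list ps | ps. length ps = n \<and> (\<forall>p \<in> set ps. prime p)}"

definition beta_irreducible :: "nat set set \<Rightarrow> bool" where
  "beta_irreducible x \<longleftrightarrow> x \<in> betaN \<and>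
     \<not> (\<exists>y \<in> betaN - {principal 1}. \<exists>z \<in> betaN - {principal 1}. x = bmult y z)"

end

(*
  Let A = {p^p | p prime}.  A meets each level L i in at most the point i^i, and A/n is
  finite for every n >= 2.  Hence a free ultrafilter x containing A lies on no finite level,
  and it is irreducible: if A is in yz with y, z different from 1, then A/n is in z for some
  n >= 2, so z is principal at some m >= 2; then A/m is in y, so y is principal as well, and
  so is x = yz, which is absurd.
  There are 2^c free ultrafilters containing A: Hausdorff's independent family of continuum
  many subsets of a countable set, transported into A, can be extended by each of its 2^c
  sign patterns (every set or its complement) to a free ultrafilter.  As the levels cover
  the positive integers, these ultrafilters also lie in the closure of their union.
*)
theory Submission
  imports Defs "HOL-Analysis.Abstract_Topology_2"
begin

lemma Npos_iff [simp]: "n \<in> Npos \<longleftrightarrow> 1 \<le> n"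
  by (simp add: Npos_def)

lemma uf_subset_Npos: "is_uf U \<Longrightarrow> A \<in> U \<Longrightarrow> A \<subseteq> Npos"
  by (simp add: is_uf_def)

lemma uf_Npos: "is_uf U \<Longrightarrow> Npos \<in> U"
  by (simp add: is_uf_def)

lemma uf_empty: "is_uf U \<Longrightarrow> {} \<notin> U"
  by (simp add: is_uf_def)

lemma uf_Int: "is_uf U \<Longrightarrow> A \<in> U \<Longrightarrow> B \<in> U \<Longrightarrow> A \<inter> B \<in> U"
  by (simp add: is_uf_def)

lemma uf_mono: "is_uf U \<Longrightarrow> A \<in> U \<Longrightarrow> A \<subseteq> B \<Longrightarrow> B \<subseteq> Npos \<Longrightarrow> B \<in> U"
  unfolding is_uf_def by (elim conjE) blast

lemma uf_compl: "is_uf U \<Longrightarrow> A \<subseteq> Npos \<Longrightarrow> A \<notin> U \<Longrightarrow> Npos - A \<in> U"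
  unfolding is_uf_def by (elim conjE) blast

lemma uf_singleton_imp_principal:
  assumes U: "is_uf U" and m: "{m} \<in> U"
  shows "U = principal m"
proof (intro set_eqI iffI)
  fix A assume A: "A \<in> U"
  then have "A \<inter> {m} \<noteq> {}" using uf_Int[OF U A m] uf_empty[OF U] by metis
  then show "A \<in> principal m" using uf_subset_Npos[OF U A] by (auto simp: principal_def)
next
  fix A assume "A \<in> principal m"
  then show "A \<in> U" using uf_mono[OF U m] by (auto simp: principal_def)
qed

lemma uf_finite_imp_principal:
  assumes U: "is_uf U" and "finite F" "F \<in> U"
  shows "\<exists>m\<in>F. U = principal m"
  using assms(2,3)
proof (induction F rule: finite_induct)
  case empty
  then show ?case using uf_empty[OF U] by simp
next
  case (insert a F)
  show ?case
  proof (cases "{a} \<in> U")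
    case True
    then show ?thesis using uf_singleton_imp_principal[OF U] by blast
  next
    case False
    have sub: "insert a F \<subseteq> Npos" using uf_subset_Npos[OF U insert.prems] .
    then have "insert a F \<inter> (Npos - {a}) \<in> U"
      using uf_Int[OF U insert.prems uf_compl[OF U _ False]] by blast
    then have "F \<in> U" using uf_mono[OF U] sub by blast
    then show ?thesis using insert.IH by blast
  qed
qed

definition fip :: "nat set set \<Rightarrow> bool" where
  "fip K \<longleftrightarrow> (\<forall>H. finite H \<and> H \<subseteq> K \<longrightarrow> Npos \<inter> \<Inter>H \<noteq> {})"

lemma fip_insert:
  assumes "\<And>H. finite H \<Longrightarrow> H \<subseteq> M \<Longrightarrow> Npos \<inter> A \<inter> \<Inter>H \<noteq> {}"
  shows "fip (insert A M)"
  unfolding fip_def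
proof (intro allI impI)
  fix H assume H: "finite H \<and> H \<subseteq> insert A M"
  then have "Npos \<inter> A \<inter> \<Inter>(H - {A}) \<noteq> {}" using assms[of "H - {A}"] by auto
  moreover have "Npos \<inter> A \<inter> \<Inter>(H - {A}) \<subseteq> Npos \<inter> \<Inter>H" by blast
  ultimately show "Npos \<inter> \<Inter>H \<noteq> {}" by blast
qed

lemma maximal_fip_is_uf:
  assumes sub: "M \<subseteq> Pow Npos" and fM: "fip M"
    and max: "\<And>A. A \<subseteq> Npos \<Longrightarrow> fip (insert A M) \<Longrightarrow> A \<in> M"
  shows "is_uf M"
  unfolding is_uf_def
proof (intro conjI allI impI ballI)
  have inter: "Npos \<inter> \<Inter>H \<noteq> {}" if "finite H" "H \<subseteq> M" for H
    using fM that by (simp add: fip_def)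
  show "A \<subseteq> Npos" if "A \<in> M" for A
    using that sub by blast
  show "Npos \<in> M"
    by (intro max fip_insert) (simp_all add: inter)
  show "{} \<notin> M"
    using inter[of "{{}}"] by auto
  show "A \<inter> B \<in> M" if "A \<in> M" "B \<in> M" for A B
  proof (intro max fip_insert)
    show "A \<inter> B \<subseteq> Npos" using that sub by blast
    fix H assume "finite H" "H \<subseteq> M"
    then show "Npos \<inter> (A \<inter> B) \<inter> \<Inter>H \<noteq> {}"
      using inter[of "insert A (insert B H)"] that by (simp add: Int_assoc)
  qed
  show "B \<in> M" if "A \<in> M" "A \<subseteq> B" "B \<subseteq> Npos" for A B
  proof (intro max fip_insert)
    show "B \<subseteq> Npos" by fact
    fix H assume "finite H" "H \<subseteq> M"
    then show "Npos \<inter> B \<inter> \<Inter>H \<noteq> {}"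
      using inter[of "insert A H"] that by auto
  qed
  show "A \<in> M \<or> Npos - A \<in> M" if A: "A \<subseteq> Npos" for A
  proof (rule ccontr)
    assume "\<not> ?thesis"
    then have "\<not> fip (insert A M)" "\<not> fip (insert (Npos - A) M)"
      using max A by auto
    then obtain H1 H2 where H1: "finite H1" "H1 \<subseteq> M" "Npos \<inter> A \<inter> \<Inter>H1 = {}"
      and H2: "finite H2" "H2 \<subseteq> M" "Npos \<inter> (Npos - A) \<inter> \<Inter>H2 = {}"
      using fip_insert by metis
    have "Npos \<inter> \<Inter>(H1 \<union> H2) = {}" using H1(3) H2(3) by blast
    then show False using inter[of "H1 \<union> H2"] H1 H2 by simp
  qed
qed

lemma uf_extension:
  assumes "G \<subseteq> Pow Npos" "fip G"
  shows "\<exists>U. is_uf U \<and> G \<subseteq> U"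
proof -
  define \<A> where "\<A> = {K. G \<subseteq> K \<and> K \<subseteq> Pow Npos \<and> fip K}"
  have "\<exists>M\<in>\<A>. \<forall>K\<in>\<A>. M \<subseteq> K \<longrightarrow> K = M"
  proof (rule subset_Zorn_nonempty)
    show "\<A> \<noteq> {}" using assms by (auto simp: \<A>_def)
    fix \<C> assume C: "\<C> \<noteq> {}" "subset.chain \<A> \<C>"
    then have C\<A>: "\<C> \<subseteq> \<A>" by (simp add: subset_chain_def)
    have "fip (\<Union>\<C>)"
      unfolding fip_def
    proof (intro allI impI)
      fix H assume "finite H \<and> H \<subseteq> \<Union>\<C>"
      then obtain K where "K \<in> \<C>" "H \<subseteq> K"
        using finite_subset_Union_chain[OF _ _ C] by metis
      then show "Npos \<inter> \<Inter>H \<noteq> {}"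
        using C\<A> \<open>finite H \<and> H \<subseteq> \<Union>\<C>\<close> by (auto simp: \<A>_def fip_def)
    qed
    moreover have "G \<subseteq> \<Union>\<C>" and "\<Union>\<C> \<subseteq> Pow Npos"
      using C(1) C\<A> unfolding \<A>_def by blast+
    ultimately show "\<Union>\<C> \<in> \<A>" by (simp add: \<A>_def)
  qed
  then obtain M where M: "M \<in> \<A>" and max: "\<And>K. K \<in> \<A> \<Longrightarrow> M \<subseteq> K \<Longrightarrow> K = M"
    by blast
  have "is_uf M"
  proof (rule maximal_fip_is_uf)
    show "M \<subseteq> Pow Npos" "fip M" using M by (auto simp: \<A>_def)
    fix A assume "A \<subseteq> Npos" "fip (insert A M)"
    then have "insert A M \<in> \<A>" using M by (auto simp: \<A>_def)
    then show "A \<in> M" using max by blast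
  qed
  then show ?thesis using M by (auto simp: \<A>_def)
qed

definition free_uf :: "nat set set \<Rightarrow> bool" where
  "free_uf U \<longleftrightarrow> is_uf U \<and> (\<forall>F\<in>U. infinite F)"

lemma free_uf_infinite: "free_uf U \<Longrightarrow> F \<in> U \<Longrightarrow> infinite F"
  by (simp add: free_uf_def)

lemma free_uf_extension:
  assumes G: "G \<subseteq> Pow Npos"
    and inf: "\<And>H. finite H \<Longrightarrow> H \<subseteq> G \<Longrightarrow> infinite (Npos \<inter> \<Inter>H)"
  shows "\<exists>U. free_uf U \<and> G \<subseteq> U"
proof -
  define cofin where "cofin = (\<lambda>F. Npos - F) ` {F. finite F}"
  have "fip (G \<union> cofin)"
    unfolding fip_def
  proof (intro allI impI)
    fix H assume H: "finite H \<and> H \<subseteq> G \<union> cofin"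
    then obtain Fs where Fs: "Fs \<subseteq> {F. finite F}" "finite Fs" "H - G = (\<lambda>F. Npos - F) ` Fs"
      using finite_subset_image[of "H - G" "\<lambda>F. Npos - F" "{F. finite F}"]
      by (auto simp: cofin_def)
    have "infinite (Npos \<inter> \<Inter>(H \<inter> G) - \<Union>Fs)"
      using inf[of "H \<inter> G"] H Fs(1,2) by (intro Diff_infinite_finite finite_Union) auto
    moreover have "Npos \<inter> \<Inter>(H \<inter> G) - \<Union>Fs \<subseteq> Npos \<inter> \<Inter>H" using Fs(3) by blast
    ultimately show "Npos \<inter> \<Inter>H \<noteq> {}" by (metis finite.emptyI finite_subset subset_empty)
  qed
  moreover have "G \<union> cofin \<subseteq> Pow Npos" using G by (auto simp: cofin_def)
  ultimately obtain U where U: "is_uf U" "G \<union> cofin \<subseteq> U" using uf_extension by blast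
  have "infinite F" if "F \<in> U" for F
  proof
    assume "finite F"
    then have "Npos - F \<in> U" using U(2) by (auto simp: cofin_def)
    then have "F \<inter> (Npos - F) \<in> U" using uf_Int[OF U(1) \<open>F \<in> U\<close>] by blast
    then show False using uf_empty[OF U(1)] by simp
  qed
  then show ?thesis using U by (auto simp: free_uf_def)
qed

text \<open>Hausdorff's independent family: \<open>(n, S)\<close> codes a family \<open>S\<close> of subsets of \<open>{..<n}\<close>,
  and \<open>trace_set X\<close> collects the codes whose family contains the trace of \<open>X\<close>.\<close>

definition trace_codes :: "(nat \<times> nat set set) set" where
  "trace_codes = {(n, S). S \<subseteq> Pow {..<n}}"

definition trace_set :: "nat set \<Rightarrow> (nat \<times> nat set set) set" where
  "trace_set X = {(n, S) \<in> trace_codes. X \<inter> {..<n} \<in> S}"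

lemma countable_trace_codes: "countable trace_codes"
proof -
  have "countable (SIGMA n:UNIV. Pow (Pow {..<n::nat}))"
    by (rule countable_SIGMA) (simp_all add: countable_finite)
  moreover have "trace_codes = (SIGMA n:UNIV. Pow (Pow {..<n}))"
    by (auto simp: trace_codes_def)
  ultimately show ?thesis by simp
qed

lemma eventually_inj_on_truncation:
  assumes "finite V"
  shows "eventually (\<lambda>n. inj_on (\<lambda>X. X \<inter> {..<n}) V) sequentially"
proof -
  have "eventually (\<lambda>n. X \<inter> {..<n} = Y \<inter> {..<n} \<longrightarrow> X = Y) sequentially" for X Y :: "nat set"
  proof (cases "X = Y")
    case False
    then obtain d where "d \<in> (X - Y) \<union> (Y - X)" by blast
    then show ?thesis by (intro eventually_mono[OF eventually_gt_at_top[of d]]) blast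
  qed simp
  then have "eventually (\<lambda>n. \<forall>(X, Y) \<in> V \<times> V. X \<inter> {..<n} = Y \<inter> {..<n} \<longrightarrow> X = Y) sequentially"
    using assms by (intro eventually_ball_finite) auto
  then show ?thesis by (rule eventually_mono) (auto simp: inj_on_def)
qed

lemma infinite_trace_cell:
  assumes "finite C"
  shows "infinite {d \<in> trace_codes. \<forall>X\<in>C. d \<in> trace_set X \<longleftrightarrow> X \<in> \<A>}"
proof -
  define code where "code n = (n, (\<lambda>X. X \<inter> {..<n}) ` (C \<inter> \<A>))" for n
  obtain k where k: "\<And>n. k \<le> n \<Longrightarrow> inj_on (\<lambda>X. X \<inter> {..<n}) C"
    using eventually_inj_on_truncation[OF assms] by (auto simp: eventually_sequentially)
  have code: "code n \<in> trace_codes" for n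
    by (auto simp: code_def trace_codes_def)
  have "code n \<in> trace_set X \<longleftrightarrow> X \<in> \<A>" if "k \<le> n" "X \<in> C" for n X
  proof -
    have "code n \<in> trace_set X \<longleftrightarrow> X \<inter> {..<n} \<in> (\<lambda>X. X \<inter> {..<n}) ` (C \<inter> \<A>)"
      using code[of n] by (simp add: trace_set_def code_def)
    also have "\<dots> \<longleftrightarrow> X \<in> C \<inter> \<A>"
      using inj_on_image_mem_iff[OF k[OF that(1)] that(2), of "C \<inter> \<A>"] by blast
    finally show ?thesis using that(2) by blast
  qed
  then have "code ` {k..} \<subseteq> {d \<in> trace_codes. \<forall>X\<in>C. d \<in> trace_set X \<longleftrightarrow> X \<in> \<A>}"
    using code by auto
  moreover have "infinite (code ` {k..})"
  proof
    assume "finite (code ` {k..})"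
    moreover have "inj_on code {k..}" by (auto simp: code_def inj_on_def)
    ultimately show False using finite_imageD infinite_Ici by blast
  qed
  ultimately show ?thesis using finite_subset by blast
qed

definition indep_base :: "(nat \<times> nat set set \<Rightarrow> nat) \<Rightarrow> nat set set \<Rightarrow> nat set set" where
  "indep_base h \<A> = range (\<lambda>X. h ` (if X \<in> \<A> then trace_set X else trace_codes - trace_set X))"

lemma indep_base_subset: "S \<in> indep_base h \<A> \<Longrightarrow> S \<subseteq> h ` trace_codes"
  by (auto simp: indep_base_def trace_set_def split: if_splits)

lemma indep_base_Inter_infinite:
  assumes h: "inj_on h trace_codes" and H: "finite H" "H \<subseteq> indep_base h \<A>"
  shows "infinite (h ` trace_codes \<inter> \<Inter>H)"
proof -
  obtain C where C: "finite C" "H = (\<lambda>X. h ` (if X \<in> \<A> then trace_set X else trace_codes - trace_set X)) ` C"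
    using finite_subset_image[OF H[unfolded indep_base_def]] by blast
  define cell where "cell = {d \<in> trace_codes. \<forall>X\<in>C. d \<in> trace_set X \<longleftrightarrow> X \<in> \<A>}"
  have "h ` cell \<subseteq> h ` trace_codes \<inter> \<Inter>H"
    unfolding C(2) cell_def by auto
  moreover have "infinite (h ` cell)"
  proof
    assume "finite (h ` cell)"
    moreover have "inj_on h cell" using h by (rule inj_on_subset) (simp add: cell_def)
    ultimately show False using infinite_trace_cell[OF C(1)] finite_imageD unfolding cell_def by blast
  qed
  ultimately show ?thesis using finite_subset by blast
qed

lemma indep_base_separates:
  assumes h: "inj_on h trace_codes" and "X \<in> \<A>" "X \<notin> \<B>"
    and U: "is_uf U" "indep_base h \<A> \<subseteq> U"
  shows "\<not> indep_base h \<B> \<subseteq> U"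
proof
  assume "indep_base h \<B> \<subseteq> U"
  moreover have "h ` trace_set X \<in> indep_base h \<A>" "h ` (trace_codes - trace_set X) \<in> indep_base h \<B>"
    using assms(2,3) unfolding indep_base_def by (auto intro!: image_eqI[where x = X])
  ultimately have "h ` trace_set X \<in> U" "h ` (trace_codes - trace_set X) \<in> U"
    using U(2) by blast+
  then have "h ` trace_set X \<inter> h ` (trace_codes - trace_set X) \<in> U"
    using uf_Int[OF U(1)] by blast
  moreover have "h ` (trace_codes - trace_set X) = h ` trace_codes - h ` trace_set X"
    by (rule inj_on_image_set_diff[OF h]) (auto simp: trace_set_def)
  ultimately show False using uf_empty[OF U(1)] by (simp add: Int_Diff)
qed

lemma countable_inj_into_infinite:
  fixes A :: "nat set"
  assumes "countable B" "infinite A"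
  shows "\<exists>h. inj_on h B \<and> h ` B \<subseteq> A"
proof (intro exI conjI)
  have "inj (from_nat_into A)"
    using bij_betw_from_nat_into[OF countableI_type assms(2)] by (simp add: bij_betw_def)
  then show "inj_on (from_nat_into A \<circ> to_nat_on B) B"
    using comp_inj_on[OF inj_on_to_nat_on[OF assms(1)] inj_on_subset[OF _ subset_UNIV]] by blast
  show "(from_nat_into A \<circ> to_nat_on B) ` B \<subseteq> A"
    using from_nat_into[of A] assms(2) by auto
qed

lemma indep_base_free_uf_extension:
  assumes h: "inj_on h trace_codes" and hN: "h ` trace_codes \<subseteq> Npos"
  shows "\<exists>U. free_uf U \<and> indep_base h \<A> \<subseteq> U"
proof (rule free_uf_extension)
  show "indep_base h \<A> \<subseteq> Pow Npos"
    using indep_base_subset hN by blast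
  fix H assume "finite H" "H \<subseteq> indep_base h \<A>"
  moreover have "h ` trace_codes \<inter> \<Inter>H \<subseteq> Npos \<inter> \<Inter>H" using hN by blast
  ultimately show "infinite (Npos \<inter> \<Inter>H)"
    using indep_base_Inter_infinite[OF h] finite_subset by blast
qed

lemma free_ufs_containing_lepoll:
  assumes "infinite A" "A \<subseteq> Npos"
  shows "Pow (UNIV :: nat set set) \<lesssim> {x. free_uf x \<and> A \<in> x}"
proof -
  obtain h where h: "inj_on h trace_codes" "h ` trace_codes \<subseteq> A"
    using countable_inj_into_infinite[OF countable_trace_codes assms(1)] by blast
  moreover have "h ` trace_codes \<subseteq> Npos" using h(2) assms(2) by blast
  ultimately obtain U where U: "\<And>\<A>. free_uf (U \<A>) \<and> indep_base h \<A> \<subseteq> U \<A>"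
    using indep_base_free_uf_extension by metis
  have "A \<in> U \<A>" for \<A>
  proof -
    obtain S where S: "S \<in> indep_base h \<A>" by (auto simp: indep_base_def)
    then have "S \<in> U \<A>" "S \<subseteq> A" using U indep_base_subset h(2) by blast+
    moreover have "is_uf (U \<A>)" using U by (simp add: free_uf_def)
    ultimately show ?thesis using uf_mono assms(2) by blast
  qed
  moreover have "inj U"
  proof
    fix \<A> \<B> assume eq: "U \<A> = U \<B>"
    show "\<A> = \<B>"
    proof (rule ccontr)
      assume "\<A> \<noteq> \<B>"
      then obtain X where "X \<in> \<A> \<and> X \<notin> \<B> \<or> X \<in> \<B> \<and> X \<notin> \<A>" by blast
      then show False
        using indep_base_separates[OF h(1)] U eq unfolding free_uf_def by metis
    qed
  qed
  ultimately show ?thesis unfolding lepoll_def using U by auto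
qed

lemma eqpoll_Pow: "A \<approx> B \<Longrightarrow> Pow A \<approx> Pow B"
  unfolding eqpoll_def using bij_betw_Pow by blast

lemma bmult_principal:
  assumes "1 \<le> a" "1 \<le> b"
  shows "bmult (principal a) (principal b) = principal (a * b)"
  using assms by (auto simp: bmult_def principal_def divset_def mult.commute)

lemma free_uf_irreducible:
  assumes x: "free_uf x" and A: "A \<in> x" and fin: "\<And>n. 2 \<le> n \<Longrightarrow> finite (divset A n)"
  shows "beta_irreducible x"
  unfolding beta_irreducible_def
proof (intro conjI notI)
  show "x \<in> betaN" using x by (simp add: free_uf_def betaN_def)
  assume "\<exists>y\<in>betaN - {principal 1}. \<exists>z\<in>betaN - {principal 1}. x = bmult y z"
  then obtain y z where y: "is_uf y" "y \<noteq> principal 1" and z: "is_uf z" "z \<noteq> principal 1"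
    and xyz: "x = bmult y z" by (auto simp: betaN_def)
  define B where "B = {n \<in> Npos. divset A n \<in> z}"
  have B: "B \<in> y" using A by (simp add: xyz bmult_def B_def)
  have "\<not> B \<subseteq> {1}"
  proof
    assume "B \<subseteq> {1}"
    then have "{1} \<in> y" using uf_mono[OF y(1) B] by simp
    then show False using uf_singleton_imp_principal[OF y(1)] y(2) by blast
  qed
  then obtain n where "n \<in> B" "n \<noteq> 1" by blast
  then have n: "2 \<le> n" "divset A n \<in> z" by (auto simp: B_def)
  then obtain m where m: "z = principal m" "m \<in> divset A n"
    using uf_finite_imp_principal[OF z(1) fin] by blast
  have "m \<noteq> 1" "1 \<le> m" using m z(2) by (auto simp: divset_def)
  then have m2: "2 \<le> m" by simp
  have "B \<subseteq> divset A m" using m(1) by (auto simp: B_def divset_def principal_def mult.commute)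
  moreover have "divset A m \<subseteq> Npos" by (auto simp: divset_def)
  ultimately have "divset A m \<in> y" using uf_mono[OF y(1) B] by blast
  then obtain k where k: "y = principal k" "k \<in> divset A m"
    using uf_finite_imp_principal[OF y(1) fin[OF m2]] by blast
  have "1 \<le> k" using k(2) by (simp add: divset_def)
  then have "x = principal (k * m)" unfolding xyz k(1) m(1) using m2 by (simp add: bmult_principal)
  then have "{k * m} \<in> x" using \<open>1 \<le> k\<close> m2 by (simp add: principal_def)
  then show False using free_uf_infinite[OF x] by blast
qed

lemma free_uf_not_on_finite_level:
  assumes x: "free_uf x" and A: "A \<in> x" and fin: "\<And>i. finite (A \<inter> L i)"
  shows "x \<notin> (\<Union>i. clos (L i))"
proof
  assume "x \<in> (\<Union>i. clos (L i))"
  then obtain i where "L i \<in> x" by (auto simp: clos_def)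
  then have "A \<inter> L i \<in> x" using x A by (simp add: free_uf_def uf_Int)
  then show False using free_uf_infinite[OF x] fin by blast
qed

definition prime_self_powers :: "nat set" where
  "prime_self_powers = {p ^ p | p. prime p}"

lemma prime_self_powers_subset_Npos: "prime_self_powers \<subseteq> Npos"
  using prime_gt_0_nat by (auto simp: prime_self_powers_def Suc_le_eq)

lemma infinite_prime_self_powers: "infinite prime_self_powers"
proof
  assume "finite prime_self_powers"
  moreover have "prime_self_powers = (\<lambda>p. p ^ p) ` {p. prime p}"
    by (auto simp: prime_self_powers_def)
  moreover have "inj_on (\<lambda>p::nat. p ^ p) {p. prime p}"
    by (intro inj_onI) (metis mem_Collect_eq prime_gt_0_nat prime_power_inj'(1))
  ultimately have "finite {p::nat. prime p}" using finite_imageD by metis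
  then show False using primes_infinite by blast
qed

lemma size_prime_factorization_L: "n \<in> L i \<Longrightarrow> size (prime_factorization n) = i"
proof -
  assume "n \<in> L i"
  then obtain ps where ps: "n = prod_mset (mset ps)" "length ps = i" "\<forall>p\<in>set ps. prime p"
    by (auto simp: L_def prod_mset_prod_list)
  have "prime_factorization n = mset ps"
    unfolding ps(1) by (rule prime_factorization_prod_mset_primes) (use ps(3) in auto)
  then show ?thesis using ps(2) by simp
qed

lemma finite_prime_self_powers_Int_L: "finite (prime_self_powers \<inter> L i)"
proof (rule finite_subset)
  show "prime_self_powers \<inter> L i \<subseteq> {i ^ i}"
  proof
    fix n assume n: "n \<in> prime_self_powers \<inter> L i"
    then obtain p where "prime p" "n = p ^ p" by (auto simp: prime_self_powers_def)
    moreover have "size (prime_factorization n) = i"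
      using n size_prime_factorization_L by blast
    ultimately show "n \<in> {i ^ i}" by (simp add: prime_factorization_prime_power)
  qed
qed simp

lemma finite_divset_prime_self_powers:
  assumes n: "2 \<le> n"
  shows "finite (divset prime_self_powers n)"
proof (rule finite_subset)
  show "divset prime_self_powers n \<subseteq> {..n ^ n}"
  proof
    fix m assume "m \<in> divset prime_self_powers n"
    then obtain p where p: "prime p" "m * n = p ^ p"
      by (auto simp: divset_def prime_self_powers_def)
    obtain q where q: "prime q" "q dvd n" using prime_factor_nat[of n] n by auto
    then have "q dvd p ^ p" by (metis dvd_mult p(2))
    then have "q = p" using p(1) q(1) prime_dvd_power primes_dvd_imp_eq by blast
    then have "p \<le> n" using q(2) n by (simp add: dvd_imp_le)
    have "m \<le> m * n" using n by simp
    also have "\<dots> = p ^ p" by (fact p(2))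
    also have "\<dots> \<le> n ^ p" using \<open>p \<le> n\<close> by (simp add: power_mono)
    also have "\<dots> \<le> n ^ n" using \<open>p \<le> n\<close> n by (simp add: power_increasing)
    finally show "m \<in> {..n ^ n}" by simp
  qed
qed simp

lemma Union_L: "(\<Union>i. L i) = Npos"
proof (intro equalityI subsetI)
  fix n assume "n \<in> (\<Union>i. L i)"
  then obtain ps where ps: "n = prod_list ps" "\<forall>p\<in>set ps. prime p" by (auto simp: L_def)
  then have "prod_list ps \<noteq> 0" by (auto simp: prod_list_zero_iff)
  then show "n \<in> Npos" using ps(1) by simp
next
  fix n :: nat assume "n \<in> Npos"
  define ps where "ps = sorted_list_of_multiset (prime_factorization n)"
  have "prod_list ps = n" using \<open>n \<in> Npos\<close>
    by (simp add: ps_def prod_mset_prod_list[symmetric])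
  moreover have "\<forall>p\<in>set ps. prime p" by (auto simp: ps_def in_prime_factors_imp_prime)
  ultimately show "n \<in> (\<Union>i. L i)" by (auto simp: L_def)
qed

theorem lemma3p1:
  shows "({x \<in> betaN. x \<notin> (\<Union>i. clos (L i))} \<approx> Pow (UNIV :: real set))
       \<and> ({x \<in> betaN. beta_irreducible x \<and> x \<notin> (\<Union>i. clos (L i))} \<approx> Pow (UNIV :: real set))
       \<and> ((\<Union>i. clos (L i)) \<noteq> clos (\<Union>i. L i))"
proof -
  let ?off = "{x \<in> betaN. x \<notin> (\<Union>i. clos (L i))}"
  let ?irr = "{x \<in> betaN. beta_irreducible x \<and> x \<notin> (\<Union>i. clos (L i))}"
  let ?free = "{x. free_uf x \<and> prime_self_powers \<in> x}"
  have free_irr: "?free \<subseteq> ?irr"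
    using free_uf_irreducible[OF _ _ finite_divset_prime_self_powers]
      free_uf_not_on_finite_level[OF _ _ finite_prime_self_powers_Int_L]
    by (auto simp: betaN_def free_uf_def)
  have Pow_reals: "Pow (UNIV :: nat set set) \<approx> Pow (UNIV :: real set)"
    by (rule eqpoll_Pow[OF nat_sets_eqpoll_reals])
  have lower: "Pow (UNIV :: real set) \<lesssim> ?free"
    using free_ufs_containing_lepoll[OF infinite_prime_self_powers prime_self_powers_subset_Npos]
      eqpoll_sym[OF Pow_reals] lepoll_trans1 by blast
  have upper: "?off \<lesssim> Pow (UNIV :: real set)"
    using subset_imp_lepoll[of ?off "Pow UNIV"] Pow_reals lepoll_trans2 by blast
  have "?irr \<subseteq> ?off" by blast
  then have "?off \<approx> Pow (UNIV :: real set)" "?irr \<approx> Pow (UNIV :: real set)"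
    using lower upper free_irr
    by (meson lepoll_antisym lepoll_trans subset_imp_lepoll)+
  moreover obtain x where "x \<in> ?free"
    using lower by (auto simp: lepoll_def)
  then have "x \<in> clos (\<Union>i. L i)" "x \<notin> (\<Union>i. clos (L i))"
    using free_irr by (auto simp: Union_L clos_def free_uf_def betaN_def uf_Npos)
  ultimately show ?thesis by blast
qed

end
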